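(* Let $\mu\in\mathbb R$, $\sigma^2>0$, let $X_1,X_2,\dots$ be i.i.d. $\mathcal N(\mu,\sigma^2)$, fix $T\in(0,\infty)$ and $M\in\mathbb N$. With $\bar X$, $S_X$, $\widehat\psi_X^*$, $\psi_0$, $U_n$, $S_m^{(n)}$, $D_m^{(n)}$ and $H_m^{(n)}$ as defined in the context, for each $m\in\{1,\dots,M\}$ there exists $r_m^{(n)}\in C([-T,T];\mathbb C)$ such that $$D_m^{(n)}(t)=\frac{\psi_0(t)}{\sqrt n}H_m^{(n)}(t)+r_m^{(n)}(t),\qquad t\in[-T,T],$$ where $\|r_m^{(n)}\|_{\infty,[-T,T]}=o_{\mathbb P}(n^{-1/2})$ and, for every $p\ge1$, the family $\{\|r_m^{(n)}\|_{\infty,[-T,T]}^p:n\in\mathbb N\}$ is uniformly integrable. Moreover, $\|D_m^{(n)}\|_{\infty,[-T,T]}=O_{\mathbb P}(n^{-1/2})$.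
   Context: For a sample $X_1,\dots,X_n$: $\bar X=\frac1n\sum_k X_k$, $S_X^2=\frac1n\sum_k(X_k-\bar X)^2$, $\widehat\psi_X(t)=\frac1n\sum_k e^{itX_k}$, and the standardized empirical characteristic function is $\widehat\psi_X^*(t)=\exp(-it\bar X/S_X)\,\widehat\psi_X(t/S_X)$. $\psi_0(t)=e^{-t^2/2}$. $U_n(t)=\sqrt n(\widehat\psi_X^*(t)-\psi_0(t))$ for $t\in[-T,T]$. For $m\in\mathbb N$, the empirical self-similarity transform is $S_m^{(n)}(t)=\big(\widehat\psi_X^*(t/\sqrt m)\big)^m$, and the iterative discrepancies are $D_m^{(n)}(t)=S_{m+1}^{(n)}(t)-S_m^{(n)}(t)$, $m=1,\dots,M$. The transformed deviation is $$H_m^{(n)}(t)=(m+1)\frac{U_n(t/\sqrt{m+1})}{\psi_0(t/\sqrt{m+1})}-m\frac{U_n(t/\sqrt m)}{\psi_0(t/\sqrt m)},\qquad t\in[-T,T].$$ $\|f\|_{\infty,[-T,T]}=\sup_{|t|\le T}|f(t)|$. *)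

theory Defs
  imports "HOL-Probability.Probability"
begin

text \<open>Samples X 0, ..., X (n-1) play the role of X_1, ..., X_n.\<close>

definition sample_mean :: "(nat \<Rightarrow> 'a \<Rightarrow> real) \<Rightarrow> nat \<Rightarrow> 'a \<Rightarrow> real" where
  "sample_mean X n \<omega> = (\<Sum>k<n. X k \<omega>) / real n"

definition sample_sd :: "(nat \<Rightarrow> 'a \<Rightarrow> real) \<Rightarrow> nat \<Rightarrow> 'a \<Rightarrow> real" where
  "sample_sd X n \<omega> = sqrt ((\<Sum>k<n. (X k \<omega> - sample_mean X n \<omega>)\<^sup>2) / real n)"

definition ecf :: "(nat \<Rightarrow> 'a \<Rightarrow> real) \<Rightarrow> nat \<Rightarrow> 'a \<Rightarrow> real \<Rightarrow> complex" where
  "ecf X n \<omega> t = (\<Sum>k<n. cis (t * X k \<omega>)) / of_nat n"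

definition std_ecf :: "(nat \<Rightarrow> 'a \<Rightarrow> real) \<Rightarrow> nat \<Rightarrow> 'a \<Rightarrow> real \<Rightarrow> complex" where
  "std_ecf X n \<omega> t =
     cis (- t * sample_mean X n \<omega> / sample_sd X n \<omega>) * ecf X n \<omega> (t / sample_sd X n \<omega>)"

definition psi0 :: "real \<Rightarrow> complex" where
  "psi0 t = complex_of_real (exp (- (t\<^sup>2) / 2))"

definition U_proc :: "(nat \<Rightarrow> 'a \<Rightarrow> real) \<Rightarrow> nat \<Rightarrow> 'a \<Rightarrow> real \<Rightarrow> complex" where
  "U_proc X n \<omega> t = complex_of_real (sqrt (real n)) * (std_ecf X n \<omega> t - psi0 t)"

definition S_trans :: "(nat \<Rightarrow> 'a \<Rightarrow> real) \<Rightarrow> nat \<Rightarrow> nat \<Rightarrow> 'a \<Rightarrow> real \<Rightarrow> complex" where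
  "S_trans X m n \<omega> t = (std_ecf X n \<omega> (t / sqrt (real m))) ^ m"

definition D_disc :: "(nat \<Rightarrow> 'a \<Rightarrow> real) \<Rightarrow> nat \<Rightarrow> nat \<Rightarrow> 'a \<Rightarrow> real \<Rightarrow> complex" where
  "D_disc X m n \<omega> t = S_trans X (m + 1) n \<omega> t - S_trans X m n \<omega> t"

definition H_dev :: "(nat \<Rightarrow> 'a \<Rightarrow> real) \<Rightarrow> nat \<Rightarrow> nat \<Rightarrow> 'a \<Rightarrow> real \<Rightarrow> complex" where
  "H_dev X m n \<omega> t =
     of_nat (m + 1) * U_proc X n \<omega> (t / sqrt (real (m + 1))) / psi0 (t / sqrt (real (m + 1)))
     - of_nat m * U_proc X n \<omega> (t / sqrt (real m)) / psi0 (t / sqrt (real m))"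

definition sup_norm_on :: "real \<Rightarrow> (real \<Rightarrow> complex) \<Rightarrow> real" where
  "sup_norm_on T f = (SUP t\<in>{-T..T}. norm (f t))"

definition unif_integrable :: "'a measure \<Rightarrow> ('i \<Rightarrow> 'a \<Rightarrow> real) \<Rightarrow> 'i set \<Rightarrow> bool" where
  "unif_integrable M F I \<longleftrightarrow>
     (\<forall>i\<in>I. integrable M (F i)) \<and>
     (\<forall>\<epsilon>>0. \<exists>K. \<forall>i\<in>I.
        (\<integral>\<omega>. \<bar>F i \<omega>\<bar> * indicator {\<omega>\<in>space M. \<bar>F i \<omega>\<bar> > K} \<omega> \<partial>M) \<le> \<epsilon>)"

definition small_oP :: "'a measure \<Rightarrow> (nat \<Rightarrow> 'a \<Rightarrow> real) \<Rightarrow> (nat \<Rightarrow> real) \<Rightarrow> bool" where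
  "small_oP M Z a \<longleftrightarrow>
     (\<forall>\<epsilon>>0. ((\<lambda>n. measure M {\<omega>\<in>space M. \<bar>Z n \<omega> / a n\<bar> > \<epsilon>}) \<longlongrightarrow> 0) sequentially)"

definition big_OP :: "'a measure \<Rightarrow> (nat \<Rightarrow> 'a \<Rightarrow> real) \<Rightarrow> (nat \<Rightarrow> real) \<Rightarrow> bool" where
  "big_OP M Z a \<longleftrightarrow>
     (\<forall>\<epsilon>>0. \<exists>K. \<forall>\<^sub>F n in sequentially.
        measure M {\<omega>\<in>space M. \<bar>Z n \<omega> / a n\<bar> > K} < \<epsilon>)"

end

theory Submission
  imports Defs
begin

text \<open>
  Standardizing the sample does not change the standardized empirical characteristic function,
  so the sample may be taken i.i.d. standard normal. Everything is then controlled by the moment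
  discrepancy \<open>W n = (\<Sum>j. (2 T) ^ j / j! * \<bar>empirical j-th moment - Gaussian j-th moment\<bar>)\<close>:
  expanding both characteristic functions into power series shows that once \<open>W n\<close> is small,
  \<open>\<bar>std_ecf - psi0\<bar> \<le> C * W n\<close> on \<open>[-T, T]\<close>. Writing \<open>std_ecf = psi0 * (1 + e)\<close> at \<open>t / sqrt k\<close>,
  the transform \<open>S_k\<close> is \<open>psi0 * (1 + e) ^ k\<close> and the \<open>k\<close>-th term of \<open>psi0 * H_m / sqrt n\<close> is
  its linear part, so \<open>\<bar>D_m\<bar> \<le> C * W n\<close> and \<open>\<bar>r_m\<bar> \<le> C * (W n)\<^sup>2\<close> there; moreover \<open>r_m\<close> is
  bounded outright because \<open>\<bar>std_ecf\<bar> \<le> 1\<close>. Finally every empirical moment has variance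
  \<open>O(1 / n)\<close>, so \<open>E (W n) = O(1 / sqrt n)\<close> and \<open>W n = O\<^sub>P(1 / sqrt n)\<close> by Markov's inequality,
  which yields both stochastic orders; a bounded family is uniformly integrable.
\<close>

section \<open>Moments of the standard normal law\<close>

definition gauss_moment :: "nat \<Rightarrow> real" where
  "gauss_moment j = (if even j then fact j / (2 ^ (j div 2) * fact (j div 2)) else 0)"

lemma gauss_moment_nonneg: "gauss_moment j \<ge> 0"
  by (simp add: gauss_moment_def)

lemma gauss_moment_even: "gauss_moment (2 * k) = fact (2 * k) / (2 ^ k * fact k)"
  by (simp add: gauss_moment_def)

lemma gauss_moment_2 [simp]: "gauss_moment 2 = 1"
  by (simp add: gauss_moment_def)

lemma gauss_moment_even_Suc: "gauss_moment (2 * Suc k) = (2 * real k + 1) * gauss_moment (2 * k)"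
proof -
  have num: "fact (2 * Suc k) = 2 * (real k + 1) * ((2 * real k + 1) * (fact (2 * k) :: real))"
    by (simp add: algebra_simps)
  have den: "(2::real) ^ Suc k * fact (Suc k) = 2 * (real k + 1) * (2 ^ k * fact k)"
    by (simp add: algebra_simps)
  show ?thesis
    unfolding gauss_moment_even num den by (subst nonzero_mult_divide_mult_cancel_left) auto
qed

lemma integral_std_normal_power:
  "(\<integral>x. std_normal_density x * x ^ j \<partial>lborel) = gauss_moment j"
proof (cases "even j")
  case True
  then obtain k where "j = 2 * k" by blast
  then show ?thesis using integral_std_normal_moment_even[of k] by (simp add: gauss_moment_even)
next
  case False
  then obtain k where "j = 2 * k + 1" using oddE by blast
  then show ?thesis using integral_std_normal_moment_odd[of k] by (simp add: gauss_moment_def)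
qed

lemma exp_half_square_sums:
  fixes z :: "'a::{real_normed_field,banach}"
  shows "(\<lambda>j. of_real (gauss_moment j / fact j) * z ^ j) sums exp (z\<^sup>2 / 2)"
proof -
  let ?f = "\<lambda>j. of_real (gauss_moment j / fact j) * z ^ j :: 'a"
  have "?f (2 * k) = (z\<^sup>2 / 2) ^ k /\<^sub>R fact k" for k
  proof -
    have "gauss_moment (2 * k) / fact (2 * k) = 1 / (2 ^ k * fact k)"
      by (simp add: gauss_moment_even)
    then have "?f (2 * k) = of_real (1 / (2 ^ k * fact k)) * (z\<^sup>2) ^ k"
      by (simp add: power_mult)
    also have "\<dots> = (z\<^sup>2 / 2) ^ k /\<^sub>R fact k"
      by (simp add: scaleR_conv_of_real power_divide divide_simps)
    finally show ?thesis .
  qed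
  then have "(\<lambda>k. ?f (2 * k)) sums exp (z\<^sup>2 / 2)"
    using exp_converges[of "z\<^sup>2 / 2"] by simp
  moreover have "strict_mono (\<lambda>k::nat. 2 * k)"
    by (rule strict_monoI) simp
  moreover have "?f j = 0" if "j \<notin> range (\<lambda>k::nat. 2 * k)" for j
    using that by (auto simp: gauss_moment_def elim!: evenE)
  ultimately show ?thesis
    using sums_mono_reindex[of "\<lambda>k. 2 * k" ?f] by simp
qed

lemma summable_sqrt_gauss_moment_series:
  assumes a: "a \<ge> 0"
  shows "summable (\<lambda>j. a ^ j / fact j * sqrt (gauss_moment (2 * j)))"
proof (rule summable_ratio_test[where c = "1 / 2" and N = "nat \<lceil>8 * a\<^sup>2\<rceil>"])
  fix j assume "j \<ge> nat \<lceil>8 * a\<^sup>2\<rceil>"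
  then have j: "8 * a\<^sup>2 \<le> real j"
    by linarith
  have "(a * sqrt (2 * real j + 1))\<^sup>2 \<le> ((real j + 1) / 2)\<^sup>2"
  proof -
    have "4 * (a\<^sup>2 * (2 * real j + 1)) \<le> 8 * a\<^sup>2 * (real j + 1)"
      by (simp add: algebra_simps)
    also have "\<dots> \<le> (real j + 1) * (real j + 1)"
      using j by (intro mult_right_mono) auto
    finally show ?thesis
      by (simp add: power_mult_distrib power2_eq_square field_simps)
  qed
  then have ratio: "a * sqrt (2 * real j + 1) / (real j + 1) \<le> 1 / 2"
    by (subst divide_le_eq) (auto dest!: power2_le_imp_le)
  have "a ^ Suc j / fact (Suc j) * sqrt (gauss_moment (2 * Suc j))
      = a * sqrt (2 * real j + 1) / (real j + 1) * (a ^ j / fact j * sqrt (gauss_moment (2 * j)))"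
  proof -
    have "sqrt (gauss_moment (2 * Suc j)) = sqrt (2 * real j + 1) * sqrt (gauss_moment (2 * j))"
      by (simp only: gauss_moment_even_Suc real_sqrt_mult)
    then show ?thesis
      by (simp add: field_simps)
  qed
  also have "\<dots> \<le> 1 / 2 * (a ^ j / fact j * sqrt (gauss_moment (2 * j)))"
    using a gauss_moment_nonneg by (intro mult_right_mono ratio) simp
  finally show "norm (a ^ Suc j / fact (Suc j) * sqrt (gauss_moment (2 * Suc j)))
      \<le> 1 / 2 * norm (a ^ j / fact j * sqrt (gauss_moment (2 * j)))"
    using a gauss_moment_nonneg by simp
qed simp

section \<open>Moment discrepancy\<close>

definition emp_moment :: "(nat \<Rightarrow> real) \<Rightarrow> nat \<Rightarrow> nat \<Rightarrow> real" where
  "emp_moment y n j = (\<Sum>k<n. y k ^ j) / real n"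

definition moment_dev :: "(nat \<Rightarrow> real) \<Rightarrow> nat \<Rightarrow> nat \<Rightarrow> real" where
  "moment_dev y n j = \<bar>emp_moment y n j - gauss_moment j\<bar>"

definition moment_discrepancy :: "real \<Rightarrow> (nat \<Rightarrow> real) \<Rightarrow> nat \<Rightarrow> real" where
  "moment_discrepancy a y n = (\<Sum>j. a ^ j / fact j * moment_dev y n j)"

lemma abs_emp_moment_le: "\<bar>emp_moment y n j\<bar> \<le> (\<Sum>k<n. \<bar>y k\<bar> ^ j)"
proof (cases "n = 0")
  case False
  then have "\<bar>\<Sum>k<n. y k ^ j\<bar> / real n \<le> \<bar>\<Sum>k<n. y k ^ j\<bar> / 1"
    by (intro divide_left_mono) auto
  then have "\<bar>emp_moment y n j\<bar> \<le> \<bar>\<Sum>k<n. y k ^ j\<bar>"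
    by (simp add: emp_moment_def abs_divide)
  also have "\<dots> \<le> (\<Sum>k<n. \<bar>y k\<bar> ^ j)"
    by (rule order_trans[OF sum_abs]) (simp add: power_abs)
  finally show ?thesis .
qed (simp add: emp_moment_def)

lemma summable_moment_discrepancy:
  assumes "a \<ge> 0"
  shows "summable (\<lambda>j. a ^ j / fact j * moment_dev y n j)"
proof (rule summable_comparison_test)
  have "summable (\<lambda>j. gauss_moment j / fact j * a ^ j)"
    using exp_half_square_sums[of a] by (simp add: sums_iff)
  then show "summable (\<lambda>j. (\<Sum>k<n. inverse (fact j) * (a * \<bar>y k\<bar>) ^ j)
      + gauss_moment j / fact j * a ^ j)"
    by (intro summable_add summable_sum summable_exp)
  have "a ^ j / fact j * moment_dev y n j \<le> a ^ j / fact j * ((\<Sum>k<n. \<bar>y k\<bar> ^ j) + gauss_moment j)"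
    for j
    using assms abs_emp_moment_le[of y n j] gauss_moment_nonneg[of j]
    by (intro mult_left_mono) (auto simp: moment_dev_def)
  then show "\<exists>N. \<forall>j\<ge>N. norm (a ^ j / fact j * moment_dev y n j)
      \<le> (\<Sum>k<n. inverse (fact j) * (a * \<bar>y k\<bar>) ^ j) + gauss_moment j / fact j * a ^ j"
    using assms
    by (auto simp: moment_dev_def sum_distrib_left power_mult_distrib field_simps)
qed

lemma moment_discrepancy_nonneg: "a \<ge> 0 \<Longrightarrow> moment_discrepancy a y n \<ge> 0"
  unfolding moment_discrepancy_def
  by (rule suminf_nonneg[OF summable_moment_discrepancy]) (auto simp: moment_dev_def)

lemma moment_dev_le_moment_discrepancy:
  assumes "a \<ge> 0"
  shows "a ^ j / fact j * moment_dev y n j \<le> moment_discrepancy a y n"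
  unfolding moment_discrepancy_def
  using sum_le_suminf[OF summable_moment_discrepancy[OF assms], of "{j}"] assms
  by (simp add: moment_dev_def)

lemma abs_emp_mean_le_moment_discrepancy:
  "a \<ge> 0 \<Longrightarrow> a * \<bar>emp_moment y n 1\<bar> \<le> moment_discrepancy a y n"
  using moment_dev_le_moment_discrepancy[of a 1 y n] by (simp add: moment_dev_def gauss_moment_def)

lemma abs_emp_second_moment_le_moment_discrepancy:
  "a \<ge> 0 \<Longrightarrow> a\<^sup>2 / 2 * \<bar>emp_moment y n 2 - 1\<bar> \<le> moment_discrepancy a y n"
  using moment_dev_le_moment_discrepancy[of a 2 y n] by (simp add: moment_dev_def)

lemma cis_mult_sums: "(\<lambda>j. (\<i> * of_real u) ^ j * of_real (y ^ j) / fact j) sums cis (u * y)"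
  using exp_converges[of "\<i> * of_real (u * y)"]
  by (simp add: cis_conv_exp scaleR_conv_of_real power_mult_distrib field_simps)

text \<open>Expanding both characteristic functions into their power series, the \<open>j\<close>-th coefficient of
  the difference is \<open>(\<i> u) ^ j / j! * (emp_moment y n j - gauss_moment j)\<close>.\<close>
lemma norm_emp_cf_sub_gauss_cf_le:
  assumes "\<bar>u\<bar> \<le> a"
  shows "cmod ((\<Sum>k<n. cis (u * y k)) / of_nat n - of_real (exp (- (u\<^sup>2) / 2)))
           \<le> moment_discrepancy a y n"
proof -
  have a: "a \<ge> 0" using assms by linarith
  define s where "s j = (\<i> * of_real u) ^ j / fact j * of_real (emp_moment y n j - gauss_moment j)"
    for j
  have emp: "(\<lambda>j. (\<Sum>k<n. (\<i> * of_real u) ^ j * of_real (y k ^ j) / fact j) / of_nat n)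
      sums ((\<Sum>k<n. cis (u * y k)) / of_nat n)"
    by (intro sums_divide sums_sum cis_mult_sums)
  have "(\<i> * complex_of_real u)\<^sup>2 / 2 = of_real (- (u\<^sup>2) / 2)"
    by (simp add: power_mult_distrib)
  then have "exp ((\<i> * complex_of_real u)\<^sup>2 / 2) = of_real (exp (- (u\<^sup>2) / 2))"
    by (simp only: exp_of_real)
  then have gauss: "(\<lambda>j. of_real (gauss_moment j / fact j) * (\<i> * of_real u) ^ j)
      sums complex_of_real (exp (- (u\<^sup>2) / 2))"
    using exp_half_square_sums[of "\<i> * of_real u"] by simp
  have "s = (\<lambda>j. (\<Sum>k<n. (\<i> * of_real u) ^ j * of_real (y k ^ j) / fact j) / of_nat n
      - of_real (gauss_moment j / fact j) * (\<i> * of_real u) ^ j)"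
  proof
    fix j
    let ?c = "(\<i> * of_real u) ^ j / fact j :: complex"
    have "(\<Sum>k<n. (\<i> * of_real u) ^ j * of_real (y k ^ j) / fact j) = ?c * of_real (\<Sum>k<n. y k ^ j)"
      by (simp add: sum_divide_distrib sum_distrib_left)
    moreover have "of_real (emp_moment y n j - gauss_moment j)
        = of_real (\<Sum>k<n. y k ^ j) / of_nat n - complex_of_real (gauss_moment j)"
      by (simp add: emp_moment_def)
    ultimately show "s j = (\<Sum>k<n. (\<i> * of_real u) ^ j * of_real (y k ^ j) / fact j) / of_nat n
        - of_real (gauss_moment j / fact j) * (\<i> * of_real u) ^ j"
      by (simp add: s_def right_diff_distrib)
  qed
  then have "s sums ((\<Sum>k<n. cis (u * y k)) / of_nat n - of_real (exp (- (u\<^sup>2) / 2)))"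
    using sums_diff[OF emp gauss] by simp
  have norm_s: "norm (s j) \<le> a ^ j / fact j * moment_dev y n j" for j
    using assms
    by (auto simp: s_def moment_dev_def norm_mult norm_divide norm_power
        intro!: mult_right_mono divide_right_mono power_mono simp flip: of_real_diff)
  have summable_norm_s: "summable (\<lambda>j. norm (s j))"
    by (rule summable_comparison_test[OF _ summable_moment_discrepancy[OF a]]) (use norm_s in auto)
  have "cmod ((\<Sum>k<n. cis (u * y k)) / of_nat n - of_real (exp (- (u\<^sup>2) / 2)))
      = norm (suminf s)"
    using \<open>s sums _\<close> by (simp add: sums_iff)
  also have "\<dots> \<le> (\<Sum>j. norm (s j))"
    by (rule summable_norm[OF summable_norm_s])
  also have "\<dots> \<le> moment_discrepancy a y n"
    unfolding moment_discrepancy_def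
    by (intro suminf_le norm_s summable_norm_s summable_moment_discrepancy a)
  finally show ?thesis .
qed

section \<open>Deviation of the standardized empirical characteristic function\<close>

lemma norm_psi0_le_1: "cmod (psi0 t) \<le> 1"
  by (simp add: psi0_def)

lemma psi0_nonzero: "psi0 t \<noteq> 0"
  by (simp add: psi0_def)

lemma norm_psi0_ge: "\<bar>t\<bar> \<le> T \<Longrightarrow> exp (- (T\<^sup>2) / 2) \<le> cmod (psi0 t)"
  using power_mono[of "\<bar>t\<bar>" T 2] by (simp add: psi0_def)

lemma psi0_div_sqrt_power: "m > 0 \<Longrightarrow> psi0 (t / sqrt (real m)) ^ m = psi0 t"
  by (simp add: psi0_def power_divide flip: of_real_power exp_of_nat_mult)

lemma abs_mult_exp_neg_half_square_le_1: "\<bar>x\<bar> * exp (- (x\<^sup>2) / 2) \<le> (1::real)"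
proof -
  have "\<bar>x\<bar> \<le> 1 + x\<^sup>2 / 2"
    using zero_le_power2[of "\<bar>x\<bar> - 1"] by (simp add: power2_eq_square algebra_simps)
  also have "\<dots> \<le> exp (x\<^sup>2 / 2)"
    by (rule exp_ge_add_one_self)
  finally show ?thesis
    by (simp add: exp_minus field_simps)
qed

lemma psi0_lipschitz: "cmod (psi0 u - psi0 t) \<le> \<bar>u - t\<bar>"
proof -
  have "\<bar>exp (- (b\<^sup>2) / 2) - exp (- (a\<^sup>2) / 2)\<bar> \<le> b - a" if "a < b" for a b :: real
  proof -
    have "\<And>x. DERIV (\<lambda>x. exp (- (x\<^sup>2) / 2)) x :> exp (- (x\<^sup>2) / 2) * (- x)"
      by (auto intro!: derivative_eq_intros simp: power2_eq_square)
    from MVT2[OF that this] obtain z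
      where "exp (- (b\<^sup>2) / 2) - exp (- (a\<^sup>2) / 2) = (b - a) * (exp (- (z\<^sup>2) / 2) * (- z))"
      by blast
    then have "\<bar>exp (- (b\<^sup>2) / 2) - exp (- (a\<^sup>2) / 2)\<bar> = (b - a) * (\<bar>z\<bar> * exp (- (z\<^sup>2) / 2))"
      using that by (simp add: abs_mult)
    also have "\<dots> \<le> b - a"
      using that abs_mult_exp_neg_half_square_le_1[of z] by (simp add: mult_left_le)
    finally show ?thesis .
  qed
  then have "\<bar>exp (- (u\<^sup>2) / 2) - exp (- (t\<^sup>2) / 2)\<bar> \<le> \<bar>u - t\<bar>"
    by (cases u t rule: linorder_cases) (force simp: abs_minus_commute)+
  then show ?thesis
    by (simp add: psi0_def flip: of_real_diff)
qed

lemma continuous_on_psi0: "continuous_on A psi0"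
  unfolding psi0_def by (intro continuous_intros) auto

lemma norm_cis_sub_1_le: "cmod (cis \<alpha> - 1) \<le> \<bar>\<alpha>\<bar>"
  using iexp_approx1[of \<alpha> 0] by (simp add: cis_conv_exp)

lemma norm_cis_mult_sub_psi0_le:
  "cmod (cis \<alpha> * E - psi0 t) \<le> cmod (E - psi0 u) + \<bar>\<alpha>\<bar> + \<bar>u - t\<bar>"
proof -
  have "cis \<alpha> * E - psi0 t = cis \<alpha> * (E - psi0 u) + (cis \<alpha> - 1) * psi0 u + (psi0 u - psi0 t)"
    by (simp add: algebra_simps)
  also have "cmod \<dots>
      \<le> cmod (cis \<alpha> * (E - psi0 u)) + cmod ((cis \<alpha> - 1) * psi0 u) + cmod (psi0 u - psi0 t)"
    by (intro norm_triangle_le add_mono norm_triangle_ineq order_refl)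
  also have "\<dots> \<le> cmod (E - psi0 u) + \<bar>\<alpha>\<bar> * 1 + \<bar>u - t\<bar>"
    unfolding norm_mult
    by (intro add_mono mult_mono norm_cis_sub_1_le norm_psi0_le_1 psi0_lipschitz) auto
  finally show ?thesis by simp
qed

lemma norm_ecf_le_1: "cmod (ecf X n \<omega> t) \<le> 1"
proof (cases "n = 0")
  case False
  have "cmod (\<Sum>k<n. cis (t * X k \<omega>)) \<le> real n"
    using norm_sum[of "\<lambda>k. cis (t * X k \<omega>)" "{..<n}"] by simp
  then show ?thesis
    using False by (simp add: ecf_def norm_divide)
qed (simp add: ecf_def)

lemma norm_std_ecf_le_1: "cmod (std_ecf X n \<omega> t) \<le> 1"
  using norm_ecf_le_1 by (simp add: std_ecf_def norm_mult)

lemma norm_std_ecf_sub_psi0_le_2: "cmod (std_ecf X n \<omega> t - psi0 t) \<le> 2"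
  using norm_triangle_ineq4[of "std_ecf X n \<omega> t" "psi0 t"] norm_std_ecf_le_1[of X n \<omega> t]
    norm_psi0_le_1[of t]
  by simp

lemma sample_mean_eq_emp_moment: "sample_mean X n \<omega> = emp_moment (\<lambda>k. X k \<omega>) n 1"
  by (simp add: sample_mean_def emp_moment_def)

lemma sample_sd_eq_emp_moment:
  assumes "n \<ge> 1"
  shows "sample_sd X n \<omega> = sqrt (emp_moment (\<lambda>k. X k \<omega>) n 2 - (emp_moment (\<lambda>k. X k \<omega>) n 1)\<^sup>2)"
proof -
  define c where "c = sample_mean X n \<omega>"
  have sum_eq: "(\<Sum>k<n. X k \<omega>) = n * c"
    using assms by (simp add: c_def sample_mean_def)
  have mean: "emp_moment (\<lambda>k. X k \<omega>) n 1 = c"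
    by (simp add: c_def sample_mean_eq_emp_moment)
  have "(\<Sum>k<n. (X k \<omega> - c)\<^sup>2) = (\<Sum>k<n. (X k \<omega>)\<^sup>2) - 2 * c * (\<Sum>k<n. X k \<omega>) + n * c\<^sup>2"
    by (simp add: power2_diff sum.distrib sum_subtractf sum_distrib_left mult_ac)
  also have "\<dots> = (\<Sum>k<n. (X k \<omega>)\<^sup>2) - n * c\<^sup>2"
    unfolding sum_eq by (simp add: power2_eq_square)
  finally show ?thesis
    unfolding mean using assms
    by (simp add: sample_sd_def emp_moment_def diff_divide_distrib flip: c_def)
qed

text \<open>This also holds when \<open>sample_sd X n \<omega> = 0\<close>: then all arguments of \<open>cis\<close> vanish, because
  \<open>x / 0 = 0\<close>.\<close>
lemma std_ecf_eq_sum: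
  "std_ecf X n \<omega> t
     = (\<Sum>k<n. cis (t * (X k \<omega> - sample_mean X n \<omega>) / sample_sd X n \<omega>)) / of_nat n"
proof -
  have "- t * sample_mean X n \<omega> / sample_sd X n \<omega> + t / sample_sd X n \<omega> * X k \<omega>
      = t * (X k \<omega> - sample_mean X n \<omega>) / sample_sd X n \<omega>" for k
    by (simp add: algebra_simps diff_divide_distrib)
  then show ?thesis
    by (simp add: std_ecf_def ecf_def sum_distrib_left cis_mult)
qed

lemma std_ecf_standardize:
  assumes "\<sigma> > 0"
  shows "std_ecf (\<lambda>k \<omega>. (X k \<omega> - \<mu>) / \<sigma>) n \<omega> t = std_ecf X n \<omega> t"
proof (cases "n = 0")
  case False
  let ?Y = "\<lambda>k \<omega>. (X k \<omega> - \<mu>) / \<sigma>"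
  have mean: "sample_mean ?Y n \<omega> = (sample_mean X n \<omega> - \<mu>) / \<sigma>"
    using False by (simp add: sample_mean_def sum_divide_distrib[symmetric] sum_subtractf field_simps)
  have "(\<Sum>k<n. (?Y k \<omega> - sample_mean ?Y n \<omega>)\<^sup>2) = (\<Sum>k<n. (X k \<omega> - sample_mean X n \<omega>)\<^sup>2) / \<sigma>\<^sup>2"
    unfolding mean using assms
    by (simp add: sum_divide_distrib power_divide diff_divide_distrib[symmetric])
  then have sd: "sample_sd ?Y n \<omega> = sample_sd X n \<omega> / \<sigma>"
    using assms by (simp add: sample_sd_def real_sqrt_divide real_sqrt_mult)
  have "t * (?Y k \<omega> - sample_mean ?Y n \<omega>) / sample_sd ?Y n \<omega>
      = t * (X k \<omega> - sample_mean X n \<omega>) / sample_sd X n \<omega>" for k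
    unfolding mean sd using assms by (simp add: diff_divide_distrib[symmetric])
  then show ?thesis
    unfolding std_ecf_eq_sum by simp
qed (simp add: std_ecf_def ecf_def)

lemma abs_1_minus_le_abs_1_minus_square: "(s::real) \<ge> 0 \<Longrightarrow> \<bar>1 - s\<bar> \<le> \<bar>1 - s\<^sup>2\<bar>"
proof -
  assume "s \<ge> 0"
  then have "\<bar>1 - s\<bar> * 1 \<le> \<bar>1 - s\<bar> * \<bar>1 + s\<bar>"
    by (intro mult_left_mono) auto
  also have "\<dots> = \<bar>1 - s\<^sup>2\<bar>"
    by (simp add: abs_mult power2_eq_square algebra_simps flip: abs_mult)
  finally show ?thesis by simp
qed

lemma sample_sd_close_to_1:
  assumes n: "n \<ge> 1" and T: "T > 0"
    and small: "moment_discrepancy (2 * T) (\<lambda>k. X k \<omega>) n \<le> min (T / 2) (T\<^sup>2 / 2)"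
  shows "sample_sd X n \<omega> > 1 / 2"
    and "2 * T * \<bar>1 - sample_sd X n \<omega>\<bar>
           \<le> moment_discrepancy (2 * T) (\<lambda>k. X k \<omega>) n / T
             + moment_discrepancy (2 * T) (\<lambda>k. X k \<omega>) n"
proof -
  define w where "w = moment_discrepancy (2 * T) (\<lambda>k. X k \<omega>) n"
  define m where "m = emp_moment (\<lambda>k. X k \<omega>) n 1"
  define q where "q = emp_moment (\<lambda>k. X k \<omega>) n 2"
  define s where "s = sample_sd X n \<omega>"
  have mean: "2 * T * \<bar>m\<bar> \<le> w"
    unfolding m_def w_def using T by (intro abs_emp_mean_le_moment_discrepancy) simp
  have second: "2 * T\<^sup>2 * \<bar>q - 1\<bar> \<le> w"
    unfolding q_def w_def
    using abs_emp_second_moment_le_moment_discrepancy[of "2 * T" "\<lambda>k. X k \<omega>" n] T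
    by (simp add: power_mult_distrib)
  have "2 * T * \<bar>m\<bar> \<le> 2 * T * (1 / 4)" and "2 * T\<^sup>2 * \<bar>q - 1\<bar> \<le> 2 * T\<^sup>2 * (1 / 4)"
    using mean second small by (simp_all add: w_def)
  then have m4: "\<bar>m\<bar> \<le> 1 / 4" and q4: "\<bar>q - 1\<bar> \<le> 1 / 4"
    using T by simp_all
  have "m\<^sup>2 \<le> \<bar>m\<bar>"
    using m4 mult_right_mono[of "\<bar>m\<bar>" 1 "\<bar>m\<bar>"] by (simp add: power2_eq_square)
  then have "m\<^sup>2 \<le> 1 / 4" "q \<ge> 3 / 4"
    using m4 q4 by linarith+
  then have s2: "s\<^sup>2 = q - m\<^sup>2"
    unfolding s_def sample_sd_eq_emp_moment[OF n] m_def[symmetric] q_def[symmetric] by simp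
  show "s > 1 / 2"
  proof (rule power2_less_imp_less)
    show "(1 / 2)\<^sup>2 < s\<^sup>2"
      unfolding s2 using \<open>m\<^sup>2 \<le> 1 / 4\<close> \<open>q \<ge> 3 / 4\<close> by (simp add: power_divide)
  qed (simp add: s_def sample_sd_def sum_nonneg)
  have "\<bar>1 - s\<^sup>2\<bar> \<le> \<bar>q - 1\<bar> + \<bar>m\<bar>"
    unfolding s2 using \<open>m\<^sup>2 \<le> \<bar>m\<bar>\<close> zero_le_power2[of m] abs_ge_self[of "q - 1"]
      abs_ge_minus_self[of "q - 1"]
    by (intro abs_leI) linarith+
  then have "2 * T * \<bar>1 - s\<bar> \<le> 2 * T * (\<bar>q - 1\<bar> + \<bar>m\<bar>)"
    using abs_1_minus_le_abs_1_minus_square[of s] \<open>s > 1 / 2\<close> T by (intro mult_left_mono) auto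
  also have "\<dots> = 2 * T\<^sup>2 * \<bar>q - 1\<bar> / T + 2 * T * \<bar>m\<bar>"
    using T by (simp add: field_simps power2_eq_square)
  also have "\<dots> \<le> w / T + w"
    using mean second T by (intro add_mono divide_right_mono) auto
  finally show "2 * T * \<bar>1 - s\<bar> \<le> w / T + w" .
qed

text \<open>\<open>std_ecf X n \<omega> t = cis (- t * m / s) * ecf X n \<omega> (t / s)\<close> with sample mean \<open>m\<close> and standard
  deviation \<open>s\<close>; the phase and the rescaling of \<open>t\<close> both cost a multiple of the moment
  discrepancy.\<close>
lemma norm_std_ecf_sub_psi0_le:
  assumes n: "n \<ge> 1" and T: "T > 0"
    and small: "moment_discrepancy (2 * T) (\<lambda>k. X k \<omega>) n \<le> min (T / 2) (T\<^sup>2 / 2)"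
    and t: "\<bar>t\<bar> \<le> T"
  shows "cmod (std_ecf X n \<omega> t - psi0 t) \<le> (3 + 1 / T) * moment_discrepancy (2 * T) (\<lambda>k. X k \<omega>) n"
proof -
  define w where "w = moment_discrepancy (2 * T) (\<lambda>k. X k \<omega>) n"
  define m where "m = sample_mean X n \<omega>"
  define s where "s = sample_sd X n \<omega>"
  define u where "u = t / s"
  note s = sample_sd_close_to_1[where X = X and \<omega> = \<omega>, OF n T small, folded s_def w_def]
  have "1 / s \<le> 2"
    using s(1) by (simp add: divide_simps)
  then have t_div_s: "\<bar>t\<bar> / s \<le> 2 * T"
    using mult_mono[OF t \<open>1 / s \<le> 2\<close>] T s(1) by simp
  then have "\<bar>u\<bar> \<le> 2 * T"
    using s(1) by (simp add: u_def abs_divide)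
  then have ecf: "cmod (ecf X n \<omega> u - psi0 u) \<le> w"
    unfolding ecf_def psi0_def w_def by (rule norm_emp_cf_sub_gauss_cf_le)
  have "\<bar>- t * m / s\<bar> = \<bar>t\<bar> / s * \<bar>m\<bar>"
    using s(1) by (simp add: abs_mult abs_divide)
  also have "\<dots> \<le> 2 * T * \<bar>m\<bar>"
    using t_div_s by (intro mult_right_mono) auto
  also have "\<dots> \<le> w"
    unfolding m_def w_def sample_mean_eq_emp_moment using T
    by (intro order_trans[OF _ abs_emp_mean_le_moment_discrepancy]) auto
  finally have phase: "\<bar>- t * m / s\<bar> \<le> w" .
  have "\<bar>u - t\<bar> = \<bar>t\<bar> / s * \<bar>1 - s\<bar>"
    using s(1) by (simp add: u_def abs_mult abs_divide field_simps flip: abs_mult)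
  also have "\<dots> \<le> 2 * T * \<bar>1 - s\<bar>"
    using t_div_s by (intro mult_right_mono) auto
  finally have shift: "\<bar>u - t\<bar> \<le> w / T + w"
    using s(2) by simp
  have "std_ecf X n \<omega> t = cis (- t * m / s) * ecf X n \<omega> u"
    by (simp add: std_ecf_def m_def s_def u_def)
  then have "cmod (std_ecf X n \<omega> t - psi0 t)
      \<le> cmod (ecf X n \<omega> u - psi0 u) + \<bar>- t * m / s\<bar> + \<bar>u - t\<bar>"
    by (simp only: norm_cis_mult_sub_psi0_le)
  also have "\<dots> \<le> (3 + 1 / T) * w"
    using ecf phase shift T by (simp add: algebra_simps)
  finally show ?thesis
    by (simp add: w_def)
qed

section \<open>Linearization of the self-similarity transform\<close>

lemma norm_one_plus_power_sub_linear_le: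
  fixes e :: "'a::real_normed_field"
  assumes "norm e \<le> B"
  shows "norm ((1 + e) ^ k - 1 - of_nat k * e) \<le> real k ^ 2 * (1 + B) ^ k * (norm e)\<^sup>2"
proof (induction k)
  case (Suc k)
  have B: "B \<ge> 0" "norm (1 + e) \<le> 1 + B"
    using assms norm_triangle_ineq[of 1 e] by (auto intro: order_trans[OF norm_ge_zero])
  have "(1 + e) ^ Suc k - 1 - of_nat (Suc k) * e
      = (1 + e) * ((1 + e) ^ k - 1 - of_nat k * e) + of_nat k * e\<^sup>2"
    by (simp add: algebra_simps power2_eq_square)
  then have "norm ((1 + e) ^ Suc k - 1 - of_nat (Suc k) * e)
      \<le> norm (1 + e) * norm ((1 + e) ^ k - 1 - of_nat k * e) + real k * (norm e)\<^sup>2"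
    by (metis norm_triangle_ineq norm_mult norm_of_nat norm_power)
  also have "\<dots> \<le> (1 + B) * (real k ^ 2 * (1 + B) ^ k * (norm e)\<^sup>2)
      + real k * (1 + B) ^ Suc k * (norm e)\<^sup>2"
    using Suc.IH B one_le_power[of "1 + B" "Suc k"]
    by (intro add_mono mult_mono mult_right_mono) (auto simp: mult_le_cancel_left1)
  also have "\<dots> \<le> real (Suc k) ^ 2 * (1 + B) ^ Suc k * (norm e)\<^sup>2"
    using B by (simp add: power2_eq_square algebra_simps)
  finally show ?case .
qed simp

lemma abs_div_sqrt_le: "k \<ge> 1 \<Longrightarrow> \<bar>t\<bar> \<le> T \<Longrightarrow> \<bar>t / sqrt (real k)\<bar> \<le> T"
  using divide_left_mono[of 1 "sqrt (real k)" "\<bar>t\<bar>"] by (simp add: abs_divide)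

lemma norm_S_trans_sub_psi0_le:
  assumes k: "k \<ge> 1" and t: "\<bar>t\<bar> \<le> T"
    and dev: "\<And>u. \<bar>u\<bar> \<le> T \<Longrightarrow> cmod (std_ecf X n \<omega> u - psi0 u) \<le> \<delta>"
  shows "cmod (S_trans X k n \<omega> t - psi0 t) \<le> real k * \<delta>"
proof -
  define u where "u = t / sqrt (real k)"
  have "S_trans X k n \<omega> t - psi0 t = std_ecf X n \<omega> u ^ k - psi0 u ^ k"
    using k by (simp add: S_trans_def u_def psi0_div_sqrt_power)
  also have "cmod \<dots> \<le> real k * cmod (std_ecf X n \<omega> u - psi0 u)"
    by (rule norm_power_diff[OF norm_std_ecf_le_1 norm_psi0_le_1])
  also have "\<dots> \<le> real k * \<delta>"
    using dev[OF abs_div_sqrt_le[OF k t]] by (simp add: u_def mult_left_mono)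
  finally show ?thesis .
qed

lemma norm_D_disc_le:
  assumes m: "m \<ge> 1" and t: "\<bar>t\<bar> \<le> T"
    and dev: "\<And>u. \<bar>u\<bar> \<le> T \<Longrightarrow> cmod (std_ecf X n \<omega> u - psi0 u) \<le> \<delta>"
  shows "cmod (D_disc X m n \<omega> t) \<le> (2 * real m + 1) * \<delta>"
proof -
  have "D_disc X m n \<omega> t = (S_trans X (m + 1) n \<omega> t - psi0 t) - (S_trans X m n \<omega> t - psi0 t)"
    by (simp add: D_disc_def)
  also have "cmod \<dots> \<le> real (m + 1) * \<delta> + real m * \<delta>"
    by (intro order_trans[OF norm_triangle_ineq4] add_mono norm_S_trans_sub_psi0_le[OF _ t dev] m)
      simp
  finally show ?thesis
    by (simp add: algebra_simps)
qed

definition S_trans_lin_error :: "(nat \<Rightarrow> 'a \<Rightarrow> real) \<Rightarrow> nat \<Rightarrow> nat \<Rightarrow> 'a \<Rightarrow> real \<Rightarrow> complex" where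
  "S_trans_lin_error X k n \<omega> t = S_trans X k n \<omega> t - psi0 t
     - psi0 t / complex_of_real (sqrt (real n))
       * (of_nat k * U_proc X n \<omega> (t / sqrt (real k)) / psi0 (t / sqrt (real k)))"

definition cf_remainder :: "(nat \<Rightarrow> 'a \<Rightarrow> real) \<Rightarrow> nat \<Rightarrow> nat \<Rightarrow> 'a \<Rightarrow> real \<Rightarrow> complex" where
  "cf_remainder X m n \<omega> t
     = D_disc X m n \<omega> t - psi0 t / complex_of_real (sqrt (real n)) * H_dev X m n \<omega> t"

lemma cf_remainder_eq_lin_error_diff:
  "cf_remainder X m n \<omega> t = S_trans_lin_error X (m + 1) n \<omega> t - S_trans_lin_error X m n \<omega> t"
  by (simp add: cf_remainder_def S_trans_lin_error_def D_disc_def H_dev_def algebra_simps)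

lemma D_disc_standardize:
  "\<sigma> > 0 \<Longrightarrow> D_disc (\<lambda>k \<omega>. (X k \<omega> - \<mu>) / \<sigma>) = D_disc X"
  by (intro ext) (simp add: D_disc_def S_trans_def std_ecf_standardize)

lemma cf_remainder_standardize:
  "\<sigma> > 0 \<Longrightarrow> cf_remainder (\<lambda>k \<omega>. (X k \<omega> - \<mu>) / \<sigma>) = cf_remainder X"
  by (intro ext)
    (simp add: cf_remainder_def D_disc_standardize H_dev_def U_proc_def std_ecf_standardize)

lemma S_trans_lin_error_eq:
  assumes k: "k \<ge> 1" and n: "n \<ge> 1"
    and e: "e = (std_ecf X n \<omega> (t / sqrt k) - psi0 (t / sqrt k)) / psi0 (t / sqrt k)"
  shows "S_trans_lin_error X k n \<omega> t = psi0 t * ((1 + e) ^ k - 1 - of_nat k * e)"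
proof -
  have "std_ecf X n \<omega> (t / sqrt k) = psi0 (t / sqrt k) * (1 + e)"
    using psi0_nonzero[of "t / sqrt k"] by (simp add: e field_simps)
  then have "S_trans X k n \<omega> t = psi0 t * (1 + e) ^ k"
    using k by (simp add: S_trans_def power_mult_distrib psi0_div_sqrt_power)
  moreover have "psi0 t / complex_of_real (sqrt (real n))
      * (of_nat k * U_proc X n \<omega> (t / sqrt k) / psi0 (t / sqrt k)) = psi0 t * (of_nat k * e)"
    using n by (simp add: U_proc_def e)
  ultimately show ?thesis
    by (simp add: S_trans_lin_error_def algebra_simps)
qed

lemma norm_S_trans_lin_error_le:
  assumes k: "k \<ge> 1" and n: "n \<ge> 1" and t: "\<bar>t\<bar> \<le> T"
    and dev: "\<And>u. \<bar>u\<bar> \<le> T \<Longrightarrow> cmod (std_ecf X n \<omega> u - psi0 u) \<le> \<delta>"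
  shows "cmod (S_trans_lin_error X k n \<omega> t)
           \<le> real k ^ 2 * (1 + 2 * exp (T\<^sup>2 / 2)) ^ k * (exp (T\<^sup>2 / 2) * \<delta>)\<^sup>2"
proof -
  define u where "u = t / sqrt (real k)"
  define E where "E = exp (T\<^sup>2 / 2)"
  define e where "e = (std_ecf X n \<omega> u - psi0 u) / psi0 u"
  have u: "\<bar>u\<bar> \<le> T"
    unfolding u_def by (rule abs_div_sqrt_le[OF k t])
  have "1 / cmod (psi0 u) \<le> 1 / exp (- (T\<^sup>2) / 2)"
    using norm_psi0_ge[OF u] psi0_nonzero[of u] by (intro divide_left_mono) auto
  then have inv: "1 / cmod (psi0 u) \<le> E"
    by (simp add: E_def exp_minus field_simps)
  have norm_e: "cmod e = cmod (std_ecf X n \<omega> u - psi0 u) * (1 / cmod (psi0 u))"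
    by (simp add: e_def norm_divide)
  have "\<delta> \<ge> 0"
    using dev[OF u] norm_ge_zero order_trans by blast
  then have e1: "cmod e \<le> E * \<delta>"
    unfolding norm_e using dev[OF u] inv by (subst mult.commute) (intro mult_mono, auto)
  have e2: "cmod e \<le> 2 * E"
    unfolding norm_e using norm_std_ecf_sub_psi0_le_2 inv by (intro mult_mono) (auto simp: E_def)
  have "cmod (S_trans_lin_error X k n \<omega> t) \<le> 1 * (real k ^ 2 * (1 + 2 * E) ^ k * (cmod e)\<^sup>2)"
    unfolding S_trans_lin_error_eq[OF k n e_def[unfolded u_def]] norm_mult
    by (intro mult_mono norm_psi0_le_1 norm_one_plus_power_sub_linear_le e2) auto
  also have "\<dots> \<le> real k ^ 2 * (1 + 2 * E) ^ k * (E * \<delta>)\<^sup>2"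
    using e1 by (simp, intro mult_left_mono power_mono) (auto simp: E_def)
  finally show ?thesis
    by (simp add: E_def)
qed

definition cf_remainder_const :: "nat \<Rightarrow> real \<Rightarrow> real" where
  "cf_remainder_const m T
     = 2 * (real m + 1) ^ 2 * (1 + 2 * exp (T\<^sup>2 / 2)) ^ (m + 1) * exp (T\<^sup>2 / 2) ^ 2"

lemma norm_cf_remainder_le:
  assumes m: "m \<ge> 1" and n: "n \<ge> 1" and t: "\<bar>t\<bar> \<le> T"
    and dev: "\<And>u. \<bar>u\<bar> \<le> T \<Longrightarrow> cmod (std_ecf X n \<omega> u - psi0 u) \<le> \<delta>"
  shows "cmod (cf_remainder X m n \<omega> t) \<le> cf_remainder_const m T * \<delta>\<^sup>2"
proof -
  define B where "B = 1 + 2 * exp (T\<^sup>2 / 2)"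
  define C where "C = (real m + 1) ^ 2 * B ^ (m + 1) * exp (T\<^sup>2 / 2) ^ 2"
  have "B \<ge> 1"
    by (simp add: B_def)
  have succ: "cmod (S_trans_lin_error X (m + 1) n \<omega> t) \<le> C * \<delta>\<^sup>2"
    using norm_S_trans_lin_error_le[OF _ n t dev, of "m + 1"]
    by (simp add: C_def B_def power_mult_distrib mult_ac add.commute)
  have "real m ^ 2 * B ^ m \<le> (real m + 1) ^ 2 * B ^ (m + 1)"
    using \<open>B \<ge> 1\<close> by (intro mult_mono power_mono power_increasing) auto
  then have "real m ^ 2 * B ^ m * (exp (T\<^sup>2 / 2) * \<delta>)\<^sup>2
      \<le> (real m + 1) ^ 2 * B ^ (m + 1) * (exp (T\<^sup>2 / 2) * \<delta>)\<^sup>2"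
    by (rule mult_right_mono) simp
  also have "\<dots> = C * \<delta>\<^sup>2"
    by (simp add: C_def power_mult_distrib)
  finally have "real m ^ 2 * B ^ m * (exp (T\<^sup>2 / 2) * \<delta>)\<^sup>2 \<le> C * \<delta>\<^sup>2" .
  then have cur: "cmod (S_trans_lin_error X m n \<omega> t) \<le> C * \<delta>\<^sup>2"
    using norm_S_trans_lin_error_le[OF m n t dev] by (simp add: B_def)
  have "cmod (cf_remainder X m n \<omega> t) \<le> C * \<delta>\<^sup>2 + C * \<delta>\<^sup>2"
    unfolding cf_remainder_eq_lin_error_diff
    by (rule order_trans[OF norm_triangle_ineq4 add_mono[OF succ cur]])
  then show ?thesis
    by (simp add: cf_remainder_const_def C_def B_def mult_ac)
qed

section \<open>Sup norms on \<open>[-T, T]\<close>\<close>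

lemma sup_norm_on_le:
  assumes "T \<ge> 0" and "\<And>t. t \<in> {-T..T} \<Longrightarrow> norm (f t) \<le> B"
  shows "sup_norm_on T f \<le> B"
  unfolding sup_norm_on_def by (rule cSUP_least) (use assms in auto)

lemma bdd_above_continuous_image_interval:
  fixes g :: "real \<Rightarrow> real"
  assumes "continuous_on {-T..T} g"
  shows "bdd_above (g ` {-T..T})"
  using compact_continuous_image[OF assms compact_Icc]
  by (intro bounded_imp_bdd_above compact_imp_bounded)

lemma sup_norm_on_nonneg:
  assumes "T \<ge> 0" and "continuous_on {-T..T} f"
  shows "sup_norm_on T f \<ge> 0"
proof -
  have "norm (f 0) \<le> sup_norm_on T f"
    unfolding sup_norm_on_def using assms
    by (intro cSUP_upper bdd_above_continuous_image_interval continuous_on_norm) auto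
  then show ?thesis
    using norm_ge_zero order_trans by blast
qed

lemma sup_norm_D_disc_le:
  assumes "T \<ge> 0" and m: "m \<ge> 1"
    and dev: "\<And>u. \<bar>u\<bar> \<le> T \<Longrightarrow> cmod (std_ecf X n \<omega> u - psi0 u) \<le> \<delta>"
  shows "sup_norm_on T (D_disc X m n \<omega>) \<le> (2 * real m + 1) * \<delta>"
  using assms(1) by (intro sup_norm_on_le norm_D_disc_le[OF m _ dev]) auto

lemma sup_norm_cf_remainder_le:
  assumes "T \<ge> 0" and m: "m \<ge> 1" and n: "n \<ge> 1"
    and dev: "\<And>u. \<bar>u\<bar> \<le> T \<Longrightarrow> cmod (std_ecf X n \<omega> u - psi0 u) \<le> \<delta>"
  shows "sup_norm_on T (cf_remainder X m n \<omega>) \<le> cf_remainder_const m T * \<delta>\<^sup>2"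
  using assms(1) by (intro sup_norm_on_le norm_cf_remainder_le[OF m n _ dev]) auto

lemma sup_norm_D_disc_le_moment_discrepancy:
  assumes n: "n \<ge> 1" and T: "T > 0" and m: "m \<ge> 1"
    and small: "moment_discrepancy (2 * T) (\<lambda>k. X k \<omega>) n \<le> min (T / 2) (T\<^sup>2 / 2)"
  shows "sup_norm_on T (D_disc X m n \<omega>)
           \<le> (2 * real m + 1) * (3 + 1 / T) * moment_discrepancy (2 * T) (\<lambda>k. X k \<omega>) n"
  using sup_norm_D_disc_le[OF _ m norm_std_ecf_sub_psi0_le[where X = X and \<omega> = \<omega>, OF n T small]] T
  by (simp add: mult_ac)

lemma sup_norm_cf_remainder_le_moment_discrepancy:
  assumes n: "n \<ge> 1" and T: "T > 0" and m: "m \<ge> 1"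
    and small: "moment_discrepancy (2 * T) (\<lambda>k. X k \<omega>) n \<le> min (T / 2) (T\<^sup>2 / 2)"
  shows "sup_norm_on T (cf_remainder X m n \<omega>)
           \<le> cf_remainder_const m T * (3 + 1 / T)\<^sup>2 * (moment_discrepancy (2 * T) (\<lambda>k. X k \<omega>) n)\<^sup>2"
  using T sup_norm_cf_remainder_le[OF _ m n
      norm_std_ecf_sub_psi0_le[where X = X and \<omega> = \<omega>, OF n T small]]
  by (simp add: power_mult_distrib mult_ac)

lemma cSUP_interval_eq_cSUP_Rats:
  fixes g :: "real \<Rightarrow> real"
  assumes T: "T > 0" and g: "continuous_on {-T..T} g"
  shows "(SUP t\<in>{-T..T}. g t) = (SUP t\<in>{-T..T} \<inter> \<rat>. g t)"
proof (rule antisym)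
  have bdd: "bdd_above (g ` ({-T..T} \<inter> \<rat>))"
    by (rule bdd_above_mono[OF bdd_above_continuous_image_interval[OF g]]) auto
  have "closure ({-T..T} \<inter> \<rat>) = {-T..T}"
    using closure_convex_Int_superset[of "{-T..T}" \<rat>] T by (simp add: Rats_closure_real)
  then have "g ` {-T..T} \<subseteq> closure (g ` ({-T..T} \<inter> \<rat>))"
    using continuous_image_closure_subset[OF g, of "{-T..T} \<inter> \<rat>"] by simp
  also have "\<dots> \<subseteq> {..Sup (g ` ({-T..T} \<inter> \<rat>))}"
    by (intro closure_minimal) (auto intro: cSup_upper bdd)
  finally show "(SUP t\<in>{-T..T}. g t) \<le> (SUP t\<in>{-T..T} \<inter> \<rat>. g t)"
    using T by (intro cSUP_least) (auto simp: image_subset_iff)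
  have "{-T..T} \<inter> \<rat> \<noteq> {}"
    using T Rats_0 by (metis IntI atLeastAtMost_iff empty_iff less_eq_real_def neg_less_0_iff_less)
  then show "(SUP t\<in>{-T..T} \<inter> \<rat>. g t) \<le> (SUP t\<in>{-T..T}. g t)"
    by (intro cSUP_subset_mono bdd_above_continuous_image_interval g) auto
qed

lemma borel_measurable_sup_norm_on:
  assumes T: "T > 0" and cont: "\<And>\<omega>. continuous_on {-T..T} (f \<omega>)"
    and meas: "\<And>t. (\<lambda>\<omega>. f \<omega> t) \<in> borel_measurable M"
  shows "(\<lambda>\<omega>. sup_norm_on T (f \<omega>)) \<in> borel_measurable M"
proof -
  have cont_norm: "continuous_on {-T..T} (\<lambda>t. norm (f \<omega> t))" for \<omega>
    by (intro continuous_on_norm cont)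
  have "(\<lambda>\<omega>. SUP t\<in>{-T..T} \<inter> \<rat>. norm (f \<omega> t)) \<in> borel_measurable M"
  proof (rule borel_measurable_cSUP)
    show "countable ({-T..T} \<inter> \<rat>)"
      by (rule countable_subset[OF _ countable_rat]) auto
    show "(\<lambda>\<omega>. norm (f \<omega> t)) \<in> borel_measurable M" for t
      using meas[of t] by measurable
    show "bdd_above ((\<lambda>t. norm (f \<omega> t)) ` ({-T..T} \<inter> \<rat>))" for \<omega>
      by (rule bdd_above_mono[OF bdd_above_continuous_image_interval[OF cont_norm]]) auto
  qed
  then show ?thesis
    unfolding sup_norm_on_def cSUP_interval_eq_cSUP_Rats[OF T cont_norm] .
qed

lemma continuous_on_std_ecf: "continuous_on A (std_ecf X n \<omega>)"
  unfolding std_ecf_def ecf_def cis_conv_exp divide_inverse by (intro continuous_intros)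

lemma continuous_on_std_ecf_div: "continuous_on A (\<lambda>t. std_ecf X n \<omega> (t / c))"
  by (rule continuous_on_compose2[OF continuous_on_std_ecf[of UNIV]])
    (auto simp: divide_inverse intro!: continuous_intros)

lemma continuous_on_D_disc: "continuous_on A (D_disc X m n \<omega>)"
  unfolding D_disc_def S_trans_def by (intro continuous_intros continuous_on_std_ecf_div)

lemma continuous_on_cf_remainder: "continuous_on A (cf_remainder X m n \<omega>)"
proof -
  have psi0_div: "continuous_on A (\<lambda>t. psi0 (t / c))" for c
    by (rule continuous_on_compose2[OF continuous_on_psi0[of UNIV]])
      (auto simp: divide_inverse intro!: continuous_intros)
  have "continuous_on A (\<lambda>t. U_proc X n \<omega> (t / c))" for c
    unfolding U_proc_def
    by (intro continuous_on_mult continuous_on_const continuous_on_diff continuous_on_std_ecf_div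
        psi0_div)
  then have H: "continuous_on A (H_dev X m n \<omega>)"
    unfolding H_dev_def
    by (intro continuous_on_diff continuous_on_divide continuous_on_mult continuous_on_const psi0_div)
      (auto simp: psi0_nonzero)
  show ?thesis
    unfolding cf_remainder_def divide_inverse
    by (intro continuous_on_diff continuous_on_mult continuous_on_D_disc continuous_on_const
        continuous_on_psi0 H)
qed

lemma borel_measurable_cis [measurable]: "cis \<in> borel_measurable borel"
  by (intro borel_measurable_continuous_onI continuous_intros)

context
  fixes M :: "'a measure" and X :: "nat \<Rightarrow> 'a \<Rightarrow> real"
  assumes X_measurable [measurable]: "\<And>k. X k \<in> borel_measurable M"
begin

lemma borel_measurable_std_ecf [measurable]: "(\<lambda>\<omega>. std_ecf X n \<omega> t) \<in> borel_measurable M"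
  unfolding std_ecf_def ecf_def sample_mean_def sample_sd_def by measurable

lemma borel_measurable_D_disc [measurable]: "(\<lambda>\<omega>. D_disc X m n \<omega> t) \<in> borel_measurable M"
  unfolding D_disc_def S_trans_def by measurable

lemma borel_measurable_cf_remainder [measurable]:
  "(\<lambda>\<omega>. cf_remainder X m n \<omega> t) \<in> borel_measurable M"
  unfolding cf_remainder_def H_dev_def U_proc_def by measurable

lemma borel_measurable_sup_norm_D_disc:
  "T > 0 \<Longrightarrow> (\<lambda>\<omega>. sup_norm_on T (D_disc X m n \<omega>)) \<in> borel_measurable M"
  by (rule borel_measurable_sup_norm_on[OF _ continuous_on_D_disc]) simp_all

lemma borel_measurable_sup_norm_cf_remainder:
  "T > 0 \<Longrightarrow> (\<lambda>\<omega>. sup_norm_on T (cf_remainder X m n \<omega>)) \<in> borel_measurable M"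
  by (rule borel_measurable_sup_norm_on[OF _ continuous_on_cf_remainder]) simp_all

end

section \<open>Stochastic orders and uniform integrability\<close>

lemma (in prob_space) big_OP_of_expectation_le:
  fixes W :: "nat \<Rightarrow> 'a \<Rightarrow> real"
  assumes W_meas: "\<And>n. W n \<in> borel_measurable M" and W_nonneg: "\<And>n \<omega>. W n \<omega> \<ge> 0"
    and bound: "\<forall>\<^sub>F n in sequentially. a n > 0 \<and> integrable M (W n) \<and> expectation (W n) \<le> G * a n"
  shows "big_OP M W a"
  unfolding big_OP_def
proof (intro allI impI)
  fix \<epsilon> :: real assume "\<epsilon> > 0"
  define K where "K = \<bar>G\<bar> / \<epsilon> + 1"
  have K: "K > 0" "\<bar>G\<bar> / K < \<epsilon>"
    using \<open>\<epsilon> > 0\<close> by (auto simp: K_def field_simps add_pos_pos)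
  from bound have "\<forall>\<^sub>F n in sequentially. measure M {\<omega> \<in> space M. \<bar>W n \<omega> / a n\<bar> > K} < \<epsilon>"
  proof eventually_elim
    case (elim n)
    have "measure M {\<omega> \<in> space M. \<bar>W n \<omega> / a n\<bar> > K} \<le> measure M {\<omega> \<in> space M. K * a n \<le> W n \<omega>}"
      using elim W_nonneg by (intro finite_measure_mono) (auto simp: field_simps)
    also have "\<dots> \<le> expectation (W n) / (K * a n)"
      using elim K W_nonneg by (intro integral_Markov_inequality_measure) auto
    also have "\<dots> \<le> \<bar>G\<bar> * a n / (K * a n)"
      using elim K by (intro divide_right_mono order_trans[OF _ mult_right_mono[OF abs_ge_self]]) auto
    also have "\<dots> = \<bar>G\<bar> / K"
      using elim by simp
    finally show ?case
      using K by simp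
  qed
  then show "\<exists>K. \<forall>\<^sub>F n in sequentially. measure M {\<omega> \<in> space M. \<bar>W n \<omega> / a n\<bar> > K} < \<epsilon>"
    by blast
qed

lemma (in prob_space) big_OP_of_subset:
  fixes W Z :: "nat \<Rightarrow> 'a \<Rightarrow> real"
  assumes W: "big_OP M W a" and W_meas: "\<And>n. W n \<in> borel_measurable M"
    and subset: "\<And>K. \<forall>\<^sub>F n in sequentially.
      {\<omega> \<in> space M. \<bar>Z n \<omega> / a n\<bar> > c K} \<subseteq> {\<omega> \<in> space M. \<bar>W n \<omega> / a n\<bar> > K}"
  shows "big_OP M Z a"
  unfolding big_OP_def
proof (intro allI impI)
  fix \<epsilon> :: real assume "\<epsilon> > 0"
  with W obtain K where K: "\<forall>\<^sub>F n in sequentially. measure M {\<omega> \<in> space M. \<bar>W n \<omega> / a n\<bar> > K} < \<epsilon>"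
    unfolding big_OP_def by blast
  from K subset[of K] have "\<forall>\<^sub>F n in sequentially. measure M {\<omega> \<in> space M. \<bar>Z n \<omega> / a n\<bar> > c K} < \<epsilon>"
  proof eventually_elim
    case (elim n)
    have "{\<omega> \<in> space M. \<bar>W n \<omega> / a n\<bar> > K} \<in> sets M"
      using W_meas by measurable
    with elim show ?case
      by (blast intro: le_less_trans[OF finite_measure_mono])
  qed
  then show "\<exists>K. \<forall>\<^sub>F n in sequentially. measure M {\<omega> \<in> space M. \<bar>Z n \<omega> / a n\<bar> > K} < \<epsilon>"
    by blast
qed

lemma (in prob_space) small_oP_of_subset:
  fixes W Z :: "nat \<Rightarrow> 'a \<Rightarrow> real"
  assumes W: "big_OP M W a" and W_meas: "\<And>n. W n \<in> borel_measurable M"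
    and subset: "\<And>\<eta> K. \<eta> > 0 \<Longrightarrow> \<forall>\<^sub>F n in sequentially.
      {\<omega> \<in> space M. \<bar>Z n \<omega> / a n\<bar> > \<eta>} \<subseteq> {\<omega> \<in> space M. \<bar>W n \<omega> / a n\<bar> > K}"
  shows "small_oP M Z a"
  unfolding small_oP_def
proof (intro allI impI)
  fix \<eta> :: real assume "\<eta> > 0"
  show "(\<lambda>n. measure M {\<omega> \<in> space M. \<bar>Z n \<omega> / a n\<bar> > \<eta>}) \<longlonglongrightarrow> 0"
  proof (rule order_tendstoI)
    fix \<epsilon> :: real assume "\<epsilon> > 0"
    with W obtain K where K: "\<forall>\<^sub>F n in sequentially. measure M {\<omega> \<in> space M. \<bar>W n \<omega> / a n\<bar> > K} < \<epsilon>"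
      unfolding big_OP_def by blast
    from K subset[OF \<open>\<eta> > 0\<close>, of K]
    show "\<forall>\<^sub>F n in sequentially. measure M {\<omega> \<in> space M. \<bar>Z n \<omega> / a n\<bar> > \<eta>} < \<epsilon>"
    proof eventually_elim
      case (elim n)
      have "{\<omega> \<in> space M. \<bar>W n \<omega> / a n\<bar> > K} \<in> sets M"
        using W_meas by measurable
      with elim show ?case
        by (blast intro: le_less_trans[OF finite_measure_mono])
    qed
  qed (auto intro!: always_eventually less_le_trans[OF _ measure_nonneg])
qed

text \<open>If \<open>W n = O\<^sub>P(a n)\<close> with \<open>a n \<longlonglongrightarrow> 0\<close>, then the event \<open>W n \<le> \<delta>\<close> has probability tending
  to one, so a bound that holds only on this event suffices.\<close>
lemma (in prob_space) big_OP_of_le_linear: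
  fixes W Z :: "nat \<Rightarrow> 'a \<Rightarrow> real"
  assumes W: "big_OP M W a" and W_meas: "\<And>n. W n \<in> borel_measurable M"
    and a: "a \<longlonglongrightarrow> 0" "\<forall>\<^sub>F n in sequentially. a n > 0" and "\<delta> > 0"
    and Z_nonneg: "\<And>n \<omega>. Z n \<omega> \<ge> 0"
    and le: "\<forall>\<^sub>F n in sequentially. \<forall>\<omega>\<in>space M. W n \<omega> \<le> \<delta> \<longrightarrow> Z n \<omega> \<le> C * W n \<omega>"
  shows "big_OP M Z a"
proof (rule big_OP_of_subset[OF W W_meas, where c = "\<lambda>K. \<bar>C\<bar> * K"])
  fix K
  have "\<forall>\<^sub>F n in sequentially. a n * K < \<delta>"
    using order_tendstoD(2)[OF tendsto_mult_left_zero[OF a(1)] \<open>\<delta> > 0\<close>] .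
  with a(2) le show "\<forall>\<^sub>F n in sequentially.
      {\<omega> \<in> space M. \<bar>Z n \<omega> / a n\<bar> > \<bar>C\<bar> * K} \<subseteq> {\<omega> \<in> space M. \<bar>W n \<omega> / a n\<bar> > K}"
  proof eventually_elim
    case (elim n)
    show ?case
    proof (safe, rule ccontr)
      fix \<omega> assume \<omega>: "\<omega> \<in> space M" and Z: "\<bar>Z n \<omega> / a n\<bar> > \<bar>C\<bar> * K"
        and "\<not> \<bar>W n \<omega> / a n\<bar> > K"
      then have W_le: "\<bar>W n \<omega>\<bar> \<le> K * a n"
        using elim by (simp add: abs_divide not_less pos_divide_le_eq)
      then have "W n \<omega> \<le> \<delta>"
        using elim abs_ge_self[of "W n \<omega>"] mult.commute[of K "a n"] by linarith
      then have "Z n \<omega> \<le> C * W n \<omega>"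
        using elim \<omega> by blast
      also have "\<dots> \<le> \<bar>C\<bar> * \<bar>W n \<omega>\<bar>"
        by (metis abs_ge_self abs_mult)
      also have "\<dots> \<le> \<bar>C\<bar> * K * a n"
        using W_le by (simp add: mult_left_mono mult.assoc)
      also have "\<dots> < Z n \<omega>"
        using Z Z_nonneg[of n \<omega>] elim by (simp add: pos_less_divide_eq)
      finally have "Z n \<omega> < Z n \<omega>" .
      then show False
        by simp
    qed
  qed
qed

lemma (in prob_space) small_oP_of_le_square:
  fixes W Z :: "nat \<Rightarrow> 'a \<Rightarrow> real"
  assumes W: "big_OP M W a" and W_meas: "\<And>n. W n \<in> borel_measurable M"
    and a: "a \<longlonglongrightarrow> 0" "\<forall>\<^sub>F n in sequentially. a n > 0" and "\<delta> > 0"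
    and Z_nonneg: "\<And>n \<omega>. Z n \<omega> \<ge> 0"
    and le: "\<forall>\<^sub>F n in sequentially. \<forall>\<omega>\<in>space M. W n \<omega> \<le> \<delta> \<longrightarrow> Z n \<omega> \<le> C * (W n \<omega>)\<^sup>2"
  shows "small_oP M Z a"
proof (rule small_oP_of_subset[OF W W_meas])
  fix \<eta> K :: real assume "\<eta> > 0"
  have "\<forall>\<^sub>F n in sequentially. a n * K < \<delta>" "\<forall>\<^sub>F n in sequentially. a n * (\<bar>C\<bar> * K\<^sup>2) < \<eta>"
    using order_tendstoD(2)[OF tendsto_mult_left_zero[OF a(1)]] \<open>\<delta> > 0\<close> \<open>\<eta> > 0\<close> by auto
  with a(2) le show "\<forall>\<^sub>F n in sequentially.
      {\<omega> \<in> space M. \<bar>Z n \<omega> / a n\<bar> > \<eta>} \<subseteq> {\<omega> \<in> space M. \<bar>W n \<omega> / a n\<bar> > K}"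
  proof eventually_elim
    case (elim n)
    show ?case
    proof (safe, rule ccontr)
      fix \<omega> assume \<omega>: "\<omega> \<in> space M" and Z: "\<bar>Z n \<omega> / a n\<bar> > \<eta>" and "\<not> \<bar>W n \<omega> / a n\<bar> > K"
      then have W_le: "\<bar>W n \<omega>\<bar> \<le> K * a n"
        using elim by (simp add: abs_divide not_less pos_divide_le_eq)
      then have "W n \<omega> \<le> \<delta>"
        using elim abs_ge_self[of "W n \<omega>"] mult.commute[of K "a n"] by linarith
      then have "Z n \<omega> \<le> C * (W n \<omega>)\<^sup>2"
        using elim \<omega> by blast
      also have "\<dots> \<le> \<bar>C\<bar> * (W n \<omega>)\<^sup>2"
        by (intro mult_right_mono) auto
      also have "\<dots> \<le> \<bar>C\<bar> * (K * a n)\<^sup>2"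
        using power_mono[OF W_le abs_ge_zero, of 2] by (intro mult_left_mono) simp_all
      also have "\<dots> = a n * (a n * (\<bar>C\<bar> * K\<^sup>2))"
        by (simp add: power2_eq_square mult_ac)
      also have "\<dots> < a n * \<eta>"
        using elim by (intro mult_strict_left_mono) auto
      also have "\<dots> < Z n \<omega>"
        using Z Z_nonneg[of n \<omega>] elim by (simp add: pos_less_divide_eq mult.commute)
      finally have "Z n \<omega> < Z n \<omega>" .
      then show False
        by simp
    qed
  qed
qed

lemma (in prob_space) unif_integrable_bounded:
  fixes F :: "'i \<Rightarrow> 'a \<Rightarrow> real"
  assumes meas: "\<And>i. i \<in> I \<Longrightarrow> F i \<in> borel_measurable M"
    and bounded: "\<And>i \<omega>. i \<in> I \<Longrightarrow> \<omega> \<in> space M \<Longrightarrow> \<bar>F i \<omega>\<bar> \<le> B"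
  shows "unif_integrable M F I"
  unfolding unif_integrable_def
proof (intro conjI ballI allI impI exI)
  show "integrable M (F i)" if "i \<in> I" for i
    using that meas bounded by (intro integrable_const_bound[where B = B]) auto
  fix \<epsilon> :: real and i assume "\<epsilon> > 0" "i \<in> I"
  have "(\<integral>\<omega>. \<bar>F i \<omega>\<bar> * indicator {\<omega> \<in> space M. \<bar>F i \<omega>\<bar> > B} \<omega> \<partial>M) = (\<integral>\<omega>. 0 \<partial>M)"
    by (intro Bochner_Integration.integral_cong)
      (use bounded[OF \<open>i \<in> I\<close>] in \<open>auto simp: indicator_def not_less\<close>)
  then show "(\<integral>\<omega>. \<bar>F i \<omega>\<bar> * indicator {\<omega> \<in> space M. \<bar>F i \<omega>\<bar> > B} \<omega> \<partial>M) \<le> \<epsilon>"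
    using \<open>\<epsilon> > 0\<close> by simp
qed

lemma LIMSEQ_inverse_sqrt: "(\<lambda>n. 1 / sqrt (real n)) \<longlonglongrightarrow> 0"
  using tendsto_real_sqrt[OF lim_1_over_n] by (simp add: real_sqrt_divide)

lemma eventually_inverse_sqrt_pos: "\<forall>\<^sub>F n in sequentially. 1 / sqrt (real n) > 0"
  using eventually_gt_at_top[of 0] by eventually_elim simp

section \<open>Standard normal samples\<close>

lemma (in prob_space) expectation_le_sqrt_expectation_square:
  fixes V :: "'a \<Rightarrow> real"
  assumes "integrable M V" and "integrable M (\<lambda>\<omega>. (V \<omega>)\<^sup>2)"
  shows "expectation V \<le> sqrt (expectation (\<lambda>\<omega>. (V \<omega>)\<^sup>2))"
  using variance_positive[of V] variance_eq[OF assms] by (intro real_le_rsqrt) simp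

lemma (in prob_space) expectation_square_sum_indep_centered:
  fixes Z :: "nat \<Rightarrow> 'a \<Rightarrow> real"
  assumes indep: "indep_vars (\<lambda>_. borel) Z UNIV"
    and int: "\<And>k. integrable M (Z k)" and int2: "\<And>k. integrable M (\<lambda>\<omega>. (Z k \<omega>)\<^sup>2)"
    and centered: "\<And>k. expectation (Z k) = 0"
  shows "integrable M (\<lambda>\<omega>. (\<Sum>k<n. Z k \<omega>)\<^sup>2)"
    and "expectation (\<lambda>\<omega>. (\<Sum>k<n. Z k \<omega>)\<^sup>2) = (\<Sum>k<n. expectation (\<lambda>\<omega>. (Z k \<omega>)\<^sup>2))"
proof -
  have pair: "integrable M (\<lambda>\<omega>. Z k \<omega> * Z l \<omega>)
      \<and> expectation (\<lambda>\<omega>. Z k \<omega> * Z l \<omega>) = (if k = l then expectation (\<lambda>\<omega>. (Z k \<omega>)\<^sup>2) else 0)"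
    for k l
  proof (cases "k = l")
    case False
    have indep_kl: "indep_vars (\<lambda>_. borel) Z {k, l}"
      by (rule indep_vars_subset[OF indep]) simp
    have "integrable M (\<lambda>\<omega>. \<Prod>i\<in>{k, l}. Z i \<omega>)"
      and "expectation (\<lambda>\<omega>. \<Prod>i\<in>{k, l}. Z i \<omega>) = (\<Prod>i\<in>{k, l}. expectation (Z i))"
      using indep_vars_integrable[OF _ indep_kl] indep_vars_lebesgue_integral[OF _ indep_kl] int
      by auto
    then show ?thesis
      using False centered by simp
  qed (use int2 in \<open>simp add: power2_eq_square\<close>)
  then have pair_int: "integrable M (\<lambda>\<omega>. Z k \<omega> * Z l \<omega>)" for k l
    by blast
  have square: "(\<Sum>k<n. Z k \<omega>)\<^sup>2 = (\<Sum>k<n. \<Sum>l<n. Z k \<omega> * Z l \<omega>)" for \<omega>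
    by (simp add: power2_eq_square sum_product)
  show "integrable M (\<lambda>\<omega>. (\<Sum>k<n. Z k \<omega>)\<^sup>2)"
    unfolding square using pair_int by simp
  show "expectation (\<lambda>\<omega>. (\<Sum>k<n. Z k \<omega>)\<^sup>2) = (\<Sum>k<n. expectation (\<lambda>\<omega>. (Z k \<omega>)\<^sup>2))"
    unfolding square by (simp add: pair integrable_sum sum.delta cong: if_cong)
qed

locale iid_std_normal = prob_space +
  fixes Y :: "nat \<Rightarrow> 'a \<Rightarrow> real"
  assumes indep: "indep_vars (\<lambda>_. borel) Y UNIV"
    and std_normal: "\<And>k. distributed M lborel (Y k) std_normal_density"
begin

lemma borel_measurable_Y [measurable]: "Y k \<in> borel_measurable M"
  using std_normal[of k] by (simp add: distributed_def)

lemma integrable_power: "integrable M (\<lambda>\<omega>. Y k \<omega> ^ j)"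
  using distributed_integrable[OF std_normal, of "\<lambda>x. x ^ j"] integrable_std_normal_moment
  by simp

lemma expectation_power: "expectation (\<lambda>\<omega>. Y k \<omega> ^ j) = gauss_moment j"
  using distributed_integral[OF std_normal, of "\<lambda>x. x ^ j"] integral_std_normal_power
  by simp

lemma expectation_moment_dev_square_le:
  assumes "n \<ge> 1"
  shows "integrable M (\<lambda>\<omega>. (moment_dev (\<lambda>k. Y k \<omega>) n j)\<^sup>2)"
    and "expectation (\<lambda>\<omega>. (moment_dev (\<lambda>k. Y k \<omega>) n j)\<^sup>2) \<le> gauss_moment (2 * j) / n"
proof -
  define Z where "Z = (\<lambda>k \<omega>. Y k \<omega> ^ j - gauss_moment j)"
  have Z_indep: "indep_vars (\<lambda>_. borel) Z UNIV"
    unfolding Z_def by (rule indep_vars_compose2[OF indep]) simp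
  have Z_square: "(Z k \<omega>)\<^sup>2 = Y k \<omega> ^ (2 * j) - 2 * gauss_moment j * Y k \<omega> ^ j + (gauss_moment j)\<^sup>2"
    for k \<omega>
    by (simp add: Z_def power2_diff power_mult mult_ac)
  have Z_int: "integrable M (Z k)" and Z_int2: "integrable M (\<lambda>\<omega>. (Z k \<omega>)\<^sup>2)" for k
    unfolding Z_square by (auto simp: Z_def integrable_power)
  have Z_centered: "expectation (Z k) = 0" for k
    using integrable_power by (simp add: Z_def expectation_power prob_space)
  have Z_var: "expectation (\<lambda>\<omega>. (Z k \<omega>)\<^sup>2) = gauss_moment (2 * j) - (gauss_moment j)\<^sup>2" for k
    unfolding Z_square using integrable_power
    by (simp add: expectation_power prob_space power2_eq_square)
  have dev: "(moment_dev (\<lambda>k. Y k \<omega>) n j)\<^sup>2 = (\<Sum>k<n. Z k \<omega>)\<^sup>2 / (real n)\<^sup>2" for \<omega>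
    using assms
    by (simp add: moment_dev_def emp_moment_def Z_def sum_subtractf power_divide field_simps)
  note sum_square = expectation_square_sum_indep_centered[OF Z_indep Z_int Z_int2 Z_centered]
  show "integrable M (\<lambda>\<omega>. (moment_dev (\<lambda>k. Y k \<omega>) n j)\<^sup>2)"
    unfolding dev using sum_square(1) by simp
  have "expectation (\<lambda>\<omega>. (moment_dev (\<lambda>k. Y k \<omega>) n j)\<^sup>2)
      = real n * (gauss_moment (2 * j) - (gauss_moment j)\<^sup>2) / (real n)\<^sup>2"
    unfolding dev by (simp add: sum_square(2) Z_var)
  also have "\<dots> = (gauss_moment (2 * j) - (gauss_moment j)\<^sup>2) / n"
    using assms by (simp add: power2_eq_square)
  also have "\<dots> \<le> gauss_moment (2 * j) / n"
    by (intro divide_right_mono) auto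
  finally show "expectation (\<lambda>\<omega>. (moment_dev (\<lambda>k. Y k \<omega>) n j)\<^sup>2) \<le> gauss_moment (2 * j) / n" .
qed

lemma expectation_moment_dev_le:
  assumes "n \<ge> 1"
  shows "integrable M (\<lambda>\<omega>. moment_dev (\<lambda>k. Y k \<omega>) n j)"
    and "expectation (\<lambda>\<omega>. moment_dev (\<lambda>k. Y k \<omega>) n j) \<le> sqrt (gauss_moment (2 * j)) / sqrt n"
proof -
  show int: "integrable M (\<lambda>\<omega>. moment_dev (\<lambda>k. Y k \<omega>) n j)"
    by (rule square_integrable_imp_integrable[OF _ expectation_moment_dev_square_le(1)[OF assms]])
      (simp add: moment_dev_def emp_moment_def)
  have "expectation (\<lambda>\<omega>. moment_dev (\<lambda>k. Y k \<omega>) n j)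
      \<le> sqrt (expectation (\<lambda>\<omega>. (moment_dev (\<lambda>k. Y k \<omega>) n j)\<^sup>2))"
    using expectation_moment_dev_square_le(1)[OF assms]
    by (rule expectation_le_sqrt_expectation_square[OF int])
  also have "\<dots> \<le> sqrt (gauss_moment (2 * j) / n)"
    using expectation_moment_dev_square_le(2)[OF assms] by simp
  finally show "expectation (\<lambda>\<omega>. moment_dev (\<lambda>k. Y k \<omega>) n j) \<le> sqrt (gauss_moment (2 * j)) / sqrt n"
    by (simp add: real_sqrt_divide)
qed

lemma borel_measurable_moment_discrepancy [measurable]:
  "(\<lambda>\<omega>. moment_discrepancy a (\<lambda>k. Y k \<omega>) n) \<in> borel_measurable M"
  unfolding moment_discrepancy_def moment_dev_def emp_moment_def by measurable

lemma expectation_moment_discrepancy_le: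
  assumes n: "n \<ge> 1" and a: "a \<ge> 0"
  shows "integrable M (\<lambda>\<omega>. moment_discrepancy a (\<lambda>k. Y k \<omega>) n)"
    and "expectation (\<lambda>\<omega>. moment_discrepancy a (\<lambda>k. Y k \<omega>) n)
           \<le> (\<Sum>j. a ^ j / fact j * sqrt (gauss_moment (2 * j))) / sqrt n"
proof -
  define F where "F = (\<lambda>j \<omega>. a ^ j / fact j * moment_dev (\<lambda>k. Y k \<omega>) n j)"
  define g where "g j = a ^ j / fact j * sqrt (gauss_moment (2 * j)) / sqrt n" for j
  have F_int: "integrable M (F j)" for j
    unfolding F_def using expectation_moment_dev_le(1)[OF n] by simp
  have F_exp: "expectation (F j) \<le> g j" for j
  proof -
    have "expectation (F j) = a ^ j / fact j * expectation (\<lambda>\<omega>. moment_dev (\<lambda>k. Y k \<omega>) n j)"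
      by (simp add: F_def)
    also have "\<dots> \<le> a ^ j / fact j * (sqrt (gauss_moment (2 * j)) / sqrt n)"
      using expectation_moment_dev_le(2)[OF n, of j] a by (intro mult_left_mono) auto
    finally show ?thesis
      by (simp add: g_def)
  qed
  have norm_F: "norm (F j \<omega>) = F j \<omega>" for j \<omega>
    using a by (simp add: F_def moment_dev_def)
  have g: "summable g"
    unfolding g_def by (intro summable_divide summable_sqrt_gauss_moment_series a)
  have "summable (\<lambda>j. expectation (\<lambda>\<omega>. norm (F j \<omega>)))"
    unfolding norm_F using F_exp
    by (intro summable_comparison_test[OF _ g]) (auto intro!: exI[of _ 0] integral_nonneg_AE
        simp: F_def moment_dev_def a)
  note suminf_integral = integrable_suminf[OF F_int _ this] integral_suminf[OF F_int _ this]
  have AE_summable: "AE \<omega> in M. summable (\<lambda>j. norm (F j \<omega>))"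
    using summable_moment_discrepancy[OF a] by (intro AE_I2, simp only: norm_F) (simp add: F_def)
  have W_eq: "moment_discrepancy a (\<lambda>k. Y k \<omega>) n = (\<Sum>j. F j \<omega>)" for \<omega>
    by (simp add: moment_discrepancy_def F_def)
  show "integrable M (\<lambda>\<omega>. moment_discrepancy a (\<lambda>k. Y k \<omega>) n)"
    unfolding W_eq by (rule suminf_integral(1)[OF AE_summable])
  have "expectation (\<lambda>\<omega>. moment_discrepancy a (\<lambda>k. Y k \<omega>) n) = (\<Sum>j. expectation (F j))"
    unfolding W_eq by (rule suminf_integral(2)[OF AE_summable])
  also have "\<dots> \<le> (\<Sum>j. g j)"
    by (intro suminf_le F_exp g summable_integral[OF F_int AE_summable]
        \<open>summable (\<lambda>j. expectation (\<lambda>\<omega>. norm (F j \<omega>)))\<close>)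
  also have "\<dots> = (\<Sum>j. a ^ j / fact j * sqrt (gauss_moment (2 * j))) / sqrt n"
    unfolding g_def by (rule suminf_divide[OF summable_sqrt_gauss_moment_series[OF a]])
  finally show "expectation (\<lambda>\<omega>. moment_discrepancy a (\<lambda>k. Y k \<omega>) n)
      \<le> (\<Sum>j. a ^ j / fact j * sqrt (gauss_moment (2 * j))) / sqrt n" .
qed

lemma big_OP_moment_discrepancy:
  assumes "a \<ge> 0"
  shows "big_OP M (\<lambda>n \<omega>. moment_discrepancy a (\<lambda>k. Y k \<omega>) n) (\<lambda>n. 1 / sqrt (real n))"
proof (rule big_OP_of_expectation_le)
  show "\<forall>\<^sub>F n in sequentially. 1 / sqrt (real n) > 0
      \<and> integrable M (\<lambda>\<omega>. moment_discrepancy a (\<lambda>k. Y k \<omega>) n)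
      \<and> expectation (\<lambda>\<omega>. moment_discrepancy a (\<lambda>k. Y k \<omega>) n)
        \<le> (\<Sum>j. a ^ j / fact j * sqrt (gauss_moment (2 * j))) * (1 / sqrt (real n))"
    using eventually_ge_at_top[of "1::nat"]
  proof eventually_elim
    case (elim n)
    then show ?case
      using expectation_moment_discrepancy_le[OF elim assms] by simp
  qed
qed (use assms moment_discrepancy_nonneg in auto)

context
  fixes T :: real and m :: nat
  assumes T: "T > 0" and m: "m \<ge> 1"
begin

lemma big_OP_sup_norm_D_disc:
  "big_OP M (\<lambda>n \<omega>. sup_norm_on T (D_disc Y m n \<omega>)) (\<lambda>n. 1 / sqrt (real n))"
proof (rule big_OP_of_le_linear[where W = "\<lambda>n \<omega>. moment_discrepancy (2 * T) (\<lambda>k. Y k \<omega>) n"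
      and \<delta> = "min (T / 2) (T\<^sup>2 / 2)" and C = "(2 * real m + 1) * (3 + 1 / T)"])
  show "\<forall>\<^sub>F n in sequentially. \<forall>\<omega>\<in>space M.
      moment_discrepancy (2 * T) (\<lambda>k. Y k \<omega>) n \<le> min (T / 2) (T\<^sup>2 / 2) \<longrightarrow>
      sup_norm_on T (D_disc Y m n \<omega>)
        \<le> (2 * real m + 1) * (3 + 1 / T) * moment_discrepancy (2 * T) (\<lambda>k. Y k \<omega>) n"
    using eventually_ge_at_top[of 1]
    by eventually_elim (blast intro: sup_norm_D_disc_le_moment_discrepancy[OF _ T m])
qed (use T in \<open>simp_all add: big_OP_moment_discrepancy LIMSEQ_inverse_sqrt
    eventually_inverse_sqrt_pos sup_norm_on_nonneg continuous_on_D_disc\<close>)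

lemma small_oP_sup_norm_cf_remainder:
  "small_oP M (\<lambda>n \<omega>. sup_norm_on T (cf_remainder Y m n \<omega>)) (\<lambda>n. 1 / sqrt (real n))"
proof (rule small_oP_of_le_square[where W = "\<lambda>n \<omega>. moment_discrepancy (2 * T) (\<lambda>k. Y k \<omega>) n"
      and \<delta> = "min (T / 2) (T\<^sup>2 / 2)" and C = "cf_remainder_const m T * (3 + 1 / T)\<^sup>2"])
  show "\<forall>\<^sub>F n in sequentially. \<forall>\<omega>\<in>space M.
      moment_discrepancy (2 * T) (\<lambda>k. Y k \<omega>) n \<le> min (T / 2) (T\<^sup>2 / 2) \<longrightarrow>
      sup_norm_on T (cf_remainder Y m n \<omega>)
        \<le> cf_remainder_const m T * (3 + 1 / T)\<^sup>2 * (moment_discrepancy (2 * T) (\<lambda>k. Y k \<omega>) n)\<^sup>2"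
    using eventually_ge_at_top[of 1]
    by eventually_elim (blast intro: sup_norm_cf_remainder_le_moment_discrepancy[OF _ T m])
qed (use T in \<open>simp_all add: big_OP_moment_discrepancy LIMSEQ_inverse_sqrt
    eventually_inverse_sqrt_pos sup_norm_on_nonneg continuous_on_cf_remainder\<close>)

lemma unif_integrable_sup_norm_cf_remainder_powr:
  assumes "p \<ge> 0"
  shows "unif_integrable M (\<lambda>n \<omega>. sup_norm_on T (cf_remainder Y m n \<omega>) powr p) {1..}"
proof (rule unif_integrable_bounded)
  show "(\<lambda>\<omega>. sup_norm_on T (cf_remainder Y m n \<omega>) powr p) \<in> borel_measurable M" for n
    using T
    by (intro powr_real_measurable borel_measurable_sup_norm_cf_remainder borel_measurable_const)
      simp_all
  show "\<bar>sup_norm_on T (cf_remainder Y m n \<omega>) powr p\<bar> \<le> (cf_remainder_const m T * 2\<^sup>2) powr p"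
    if "n \<in> {1..}" for n \<omega>
    using that assms T sup_norm_cf_remainder_le[OF _ m _ norm_std_ecf_sub_psi0_le_2, of T n Y \<omega>]
      sup_norm_on_nonneg[OF _ continuous_on_cf_remainder, of T Y m n \<omega>]
    by (simp add: powr_mono2)
qed

end

end

lemma iid_std_normal_standardize:
  assumes "prob_space M" and "\<sigma> > 0"
    and "prob_space.indep_vars M (\<lambda>_. borel) X UNIV"
    and "\<And>i. distributed M lborel (X i) (\<lambda>x. ennreal (normal_density \<mu> \<sigma> x))"
  shows "iid_std_normal M (\<lambda>k \<omega>. (X k \<omega> - \<mu>) / \<sigma>)"
proof -
  interpret prob_space M by fact
  show ?thesis
  proof unfold_locales
    show "indep_vars (\<lambda>_. borel) (\<lambda>k \<omega>. (X k \<omega> - \<mu>) / \<sigma>) UNIV"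
      by (rule indep_vars_compose2[OF assms(3)]) simp
    show "distributed M lborel (\<lambda>\<omega>. (X k \<omega> - \<mu>) / \<sigma>) std_normal_density" for k
      using normal_standard_normal_convert[OF assms(2)] assms(4) by simp
  qed
qed

theorem lemma1:
  fixes M :: "'a measure" and X :: "nat \<Rightarrow> 'a \<Rightarrow> real"
    and \<mu> \<sigma> T :: real and Mmax :: nat
  assumes "prob_space M"
    and "\<sigma> > 0"
    and "prob_space.indep_vars M (\<lambda>_. borel) X UNIV"
    and "\<And>i. distributed M lborel (X i) (\<lambda>x. ennreal (normal_density \<mu> \<sigma> x))"
    and "T > 0"
  shows "\<forall>m\<in>{1..Mmax}. \<exists>r :: nat \<Rightarrow> 'a \<Rightarrow> real \<Rightarrow> complex.
           (\<forall>n \<omega>. continuous_on {-T..T} (r n \<omega>))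
         \<and> (\<forall>n\<ge>1. \<forall>\<omega>\<in>space M. \<forall>t\<in>{-T..T}.
              D_disc X m n \<omega> t = psi0 t / complex_of_real (sqrt (real n)) * H_dev X m n \<omega> t + r n \<omega> t)
         \<and> (\<forall>n. (\<lambda>\<omega>. sup_norm_on T (r n \<omega>)) \<in> borel_measurable M)
         \<and> small_oP M (\<lambda>n \<omega>. sup_norm_on T (r n \<omega>)) (\<lambda>n. 1 / sqrt (real n))
         \<and> (\<forall>p::real. p \<ge> 1 \<longrightarrow>
              unif_integrable M (\<lambda>n \<omega>. sup_norm_on T (r n \<omega>) powr p) {1..})
         \<and> (\<forall>n. (\<lambda>\<omega>. sup_norm_on T (D_disc X m n \<omega>)) \<in> borel_measurable M)
         \<and> big_OP M (\<lambda>n \<omega>. sup_norm_on T (D_disc X m n \<omega>)) (\<lambda>n. 1 / sqrt (real n))"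
proof (intro ballI exI conjI allI impI)
  interpret Y: iid_std_normal M "\<lambda>k \<omega>. (X k \<omega> - \<mu>) / \<sigma>"
    using assms(1-4) by (rule iid_std_normal_standardize)
  have X_meas: "\<And>k. X k \<in> borel_measurable M"
    using assms(4) by (simp add: distributed_def)
  note standardize = D_disc_standardize[OF assms(2)] cf_remainder_standardize[OF assms(2)]
  show "continuous_on {-T..T} (cf_remainder X m n \<omega>)" for m n \<omega>
    by (rule continuous_on_cf_remainder)
  show "D_disc X m n \<omega> t = psi0 t / complex_of_real (sqrt (real n)) * H_dev X m n \<omega> t
      + cf_remainder X m n \<omega> t" for m n \<omega> t
    by (simp add: cf_remainder_def)
  show "(\<lambda>\<omega>. sup_norm_on T (cf_remainder X m n \<omega>)) \<in> borel_measurable M" for m n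
    by (rule borel_measurable_sup_norm_cf_remainder[OF X_meas assms(5)])
  show "(\<lambda>\<omega>. sup_norm_on T (D_disc X m n \<omega>)) \<in> borel_measurable M" for m n
    by (rule borel_measurable_sup_norm_D_disc[OF X_meas assms(5)])
  show "small_oP M (\<lambda>n \<omega>. sup_norm_on T (cf_remainder X m n \<omega>)) (\<lambda>n. 1 / sqrt (real n))"
    if "m \<in> {1..Mmax}" for m
    using Y.small_oP_sup_norm_cf_remainder[OF assms(5)] that unfolding standardize by simp
  show "big_OP M (\<lambda>n \<omega>. sup_norm_on T (D_disc X m n \<omega>)) (\<lambda>n. 1 / sqrt (real n))"
    if "m \<in> {1..Mmax}" for m
    using Y.big_OP_sup_norm_D_disc[OF assms(5)] that unfolding standardize by simp
  show "unif_integrable M (\<lambda>n \<omega>. sup_norm_on T (cf_remainder X m n \<omega>) powr p) {1..}"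
    if "m \<in> {1..Mmax}" "p \<ge> 1" for m and p :: real
    using Y.unif_integrable_sup_norm_cf_remainder_powr[OF assms(5)] that unfolding standardize by simp
qed

end
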